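(* Let $X$ be a Peano continuum with metric $d$, let $x\in X$, and let $(f_n)_{n\in\mathbb{N}}$ (with $\mathbb{N}=\{0,1,2,\dots\}$) be continuous loops $f_n\colon[0,1]\to X$ with $f_n(0)=f_n(1)=x$, such that $\operatorname{diam} f_n([0,1])\le 2^{-n}$ and no $f_n$ is nulhomologous (i.e. each $f_n$ represents a nonzero element of $H_1(X)$). Let $f_n^1=f_n$ and let $f_n^0$ be the constant loop at $x$. For $\alpha\in\{0,1\}^{\mathbb{N}}$ define the infinite concatenation $f^\alpha=f_0^{\alpha(0)}\ast f_1^{\alpha(1)}\ast f_2^{\alpha(2)}\ast\cdots\colon[0,1]\to X$ by $f^\alpha(t)=f_n^{\alpha(n)}\big(2^{n+1}(t-(1-2^{-n}))\big)$ for $t\in[1-2^{-n},1-2^{-n-1}]$ and $f^\alpha(1)=x$ (this is a continuous loop at $x$). Define a relation $\sim$ on the Cantor set $\{0,1\}^{\mathbb{N}}$ by $\alpha\sim\beta$ iff $f^\alpha$ and $f^\beta$ are homologous (represent the same element of $H_1(X)$). Then $\sim$ is an analytic equivalence relation on $\{0,1\}^{\mathbb{N}}$ (i.e. an analytic subset of $\{0,1\}^{\mathbb{N}}\times\{0,1\}^{\mathbb{N}}$ which is an equivalence relation), and if $\alpha,\beta\in\{0,1\}^{\mathbb{N}}$ differ at exactly one coordinate then $\alpha\not\sim\beta$.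
   Context: A Peano continuum is a connected, locally connected compact metric space. The Cantor set $\{0,1\}^{\mathbb{N}}$ carries the product topology with $\{0,1\}$ discrete. A space is Polish if it is separable and completely metrizable. If $Y$ is Polish, a set $A\subseteq Y$ is analytic if there is a Polish space $Z$ and a closed set $D\subseteq Y\times Z$ such that $A$ is the projection of $D$ to $Y$. *)

theory Defs
  imports "HOL-Analysis.Analysis"
begin

text \<open>A singular 1-simplex in X is a path, i.e. a continuous map [0,1] to X; two such maps
are the same simplex iff they agree on [0,1].\<close>

definition same_on01 :: "(real \<Rightarrow> 'a) \<Rightarrow> (real \<Rightarrow> 'a) \<Rightarrow> bool" where
  "same_on01 p q \<longleftrightarrow> (\<forall>t\<in>{0..1}. p t = q t)"

text \<open>Coefficient of the 1-simplex tau in the elementary chain p.\<close>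
definition coef1 :: "(real \<Rightarrow> 'a) \<Rightarrow> (real \<Rightarrow> 'a) \<Rightarrow> int" where
  "coef1 p tau = (if same_on01 p tau then 1 else 0)"

definition simplex2 :: "(real \<times> real) set" where
  "simplex2 = {(a, b). 0 \<le> a \<and> 0 \<le> b \<and> a + b \<le> 1}"

definition face0 :: "(real \<times> real \<Rightarrow> 'a) \<Rightarrow> real \<Rightarrow> 'a" where
  "face0 \<sigma> t = \<sigma> (1 - t, t)"
definition face1 :: "(real \<times> real \<Rightarrow> 'a) \<Rightarrow> real \<Rightarrow> 'a" where
  "face1 \<sigma> t = \<sigma> (0, t)"
definition face2 :: "(real \<times> real \<Rightarrow> 'a) \<Rightarrow> real \<Rightarrow> 'a" where
  "face2 \<sigma> t = \<sigma> (t, 0)"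

definition bd2_coef :: "(real \<times> real \<Rightarrow> 'a) \<Rightarrow> (real \<Rightarrow> 'a) \<Rightarrow> int" where
  "bd2_coef \<sigma> tau = coef1 (face0 \<sigma>) tau - coef1 (face1 \<sigma>) tau + coef1 (face2 \<sigma>) tau"

text \<open>A 1-chain (given by its coefficient function) is a boundary in X if it is the boundary
of a finite integer combination of singular 2-simplices in X.\<close>
definition is_boundary1 :: "'a::topological_space set \<Rightarrow> ((real \<Rightarrow> 'a) \<Rightarrow> int) \<Rightarrow> bool" where
  "is_boundary1 X c \<longleftrightarrow>
     (\<exists>S :: ((real \<times> real \<Rightarrow> 'a) \<times> int) list.
        (\<forall>(\<sigma>, k) \<in> set S. continuous_on simplex2 \<sigma> \<and> \<sigma> ` simplex2 \<subseteq> X) \<and>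
        (\<forall>tau. c tau = (\<Sum>(\<sigma>, k) \<leftarrow> S. k * bd2_coef \<sigma> tau)))"

definition homologous :: "'a::topological_space set \<Rightarrow> (real \<Rightarrow> 'a) \<Rightarrow> (real \<Rightarrow> 'a) \<Rightarrow> bool" where
  "homologous X f g \<longleftrightarrow> is_boundary1 X (\<lambda>tau. coef1 f tau - coef1 g tau)"

definition nulhomologous :: "'a::topological_space set \<Rightarrow> (real \<Rightarrow> 'a) \<Rightarrow> bool" where
  "nulhomologous X f \<longleftrightarrow> is_boundary1 X (coef1 f)"

definition inf_concat :: "'a \<Rightarrow> (nat \<Rightarrow> real \<Rightarrow> 'a) \<Rightarrow> (nat \<Rightarrow> bool) \<Rightarrow> real \<Rightarrow> 'a" where
  "inf_concat x f \<alpha> t =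
     (if t = 1 then x
      else (SOME v. \<exists>n. 1 - (1/2)^n \<le> t \<and> t \<le> 1 - (1/2)^(Suc n) \<and>
              v = (if \<alpha> n then f n else (\<lambda>_. x)) (2^(Suc n) * (t - (1 - (1/2)^n)))))"

definition cantor_top :: "(nat \<Rightarrow> bool) topology" where
  "cantor_top = product_topology (\<lambda>_. discrete_topology UNIV) UNIV"

definition Polish_space :: "'a topology \<Rightarrow> bool" where
  "Polish_space Z \<longleftrightarrow> separable_space Z \<and> completely_metrizable_space Z"

text \<open>Analytic subsets of a Polish space Y. The witnessing Polish space Z is taken with
carrier type nat => real (every Polish space is homeomorphic to a closed subspace of R^N).\<close>
definition analytic_in :: "'a topology \<Rightarrow> 'a set \<Rightarrow> bool" where
  "analytic_in Y A \<longleftrightarrow>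
     (\<exists>(Z :: (nat \<Rightarrow> real) topology) D. Polish_space Z \<and> closedin (prod_topology Y Z) D \<and>
        A = fst ` D)"

end

(*
  Boundaries form a subgroup of the 1-chains, so being homologous is an equivalence relation.
  A single singular 2-simplex shows that a path is homologous to the sum of its restrictions
  to [0, a], [a, b] and [b, 1]. If alpha and beta differ only at n, cutting f^alpha and f^beta
  at 1 - 2^-n and 1 - 2^-(n+1) leaves equal outer pieces, while the middle pieces are f_n and
  the constant loop; so f^alpha ~ f^beta would make f_n nulhomologous.

  For analyticity: f^alpha - f^beta is a boundary iff there are finitely many continuous
  2-simplices w_i with integer weights k_i and a labelling of the terms of the chain
  d(sum k_i w_i) - f^alpha + f^beta such that equally labelled terms are equal paths and the
  weights of each label cancel. The discrete data and a modulus of uniform continuity of the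
  w_i are coded by a point of the Polish space {z in R^N. z 0 in N}, and the w_i range over a
  compact (non-metrizable) product of copies of X. Once the data are fixed all conditions are
  closed, and projecting away a compact factor preserves closedness.
*)
theory Submission
  imports Defs
begin

section \<open>Boundaries and subdivision\<close>

lemma coef1_cong: "same_on01 p q \<Longrightarrow> coef1 p = coef1 q"
  by (auto simp: coef1_def same_on01_def fun_eq_iff)

lemma is_boundary1_0: "is_boundary1 X (\<lambda>_. 0)"
  unfolding is_boundary1_def by (rule exI[of _ "[]"]) simp

lemma is_boundary1_add:
  assumes "is_boundary1 X c" and "is_boundary1 X d"
  shows "is_boundary1 X (\<lambda>\<tau>. c \<tau> + d \<tau>)"
proof -
  obtain S T where
    "\<forall>(\<sigma>, k) \<in> set S. continuous_on simplex2 \<sigma> \<and> \<sigma> ` simplex2 \<subseteq> X"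
    "\<forall>\<tau>. c \<tau> = (\<Sum>(\<sigma>, k) \<leftarrow> S. k * bd2_coef \<sigma> \<tau>)"
    "\<forall>(\<sigma>, k) \<in> set T. continuous_on simplex2 \<sigma> \<and> \<sigma> ` simplex2 \<subseteq> X"
    "\<forall>\<tau>. d \<tau> = (\<Sum>(\<sigma>, k) \<leftarrow> T. k * bd2_coef \<sigma> \<tau>)"
    using assms unfolding is_boundary1_def by blast
  then show ?thesis
    unfolding is_boundary1_def by (intro exI[of _ "S @ T"]) (force simp: case_prod_beta)
qed

lemma is_boundary1_uminus:
  assumes "is_boundary1 X c"
  shows "is_boundary1 X (\<lambda>\<tau>. - c \<tau>)"
proof -
  obtain S where
    S: "\<forall>(\<sigma>, k) \<in> set S. continuous_on simplex2 \<sigma> \<and> \<sigma> ` simplex2 \<subseteq> X"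
    "\<forall>\<tau>. c \<tau> = (\<Sum>(\<sigma>, k) \<leftarrow> S. k * bd2_coef \<sigma> \<tau>)"
    using assms unfolding is_boundary1_def by blast
  have "(\<Sum>(\<sigma>, k) \<leftarrow> map (\<lambda>(\<sigma>, k). (\<sigma>, - k)) S. k * bd2_coef \<sigma> \<tau>)
      = - (\<Sum>(\<sigma>, k) \<leftarrow> S. k * bd2_coef \<sigma> \<tau>)" for \<tau>
    by (induction S) auto
  with S show ?thesis
    unfolding is_boundary1_def
    by (intro exI[of _ "map (\<lambda>(\<sigma>, k). (\<sigma>, - k)) S"]) (force simp: case_prod_beta)
qed

lemma is_boundary1_diff:
  assumes "is_boundary1 X c" and "is_boundary1 X d"
  shows "is_boundary1 X (\<lambda>\<tau>. c \<tau> - d \<tau>)"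
  using is_boundary1_add[OF assms(1) is_boundary1_uminus[OF assms(2)]] by simp

lemma equiv_homologous: "equiv UNIV {(a, b). homologous X (g a) (g b)}"
proof (rule equivI)
  show "refl {(a, b). homologous X (g a) (g b)}"
    by (auto simp: refl_on_def homologous_def is_boundary1_0)
  show "sym {(a, b). homologous X (g a) (g b)}"
    using is_boundary1_uminus by (fastforce simp: sym_def homologous_def)
  show "trans {(a, b). homologous X (g a) (g b)}"
    using is_boundary1_add by (fastforce simp: trans_def homologous_def)
qed auto

text \<open>A copy of the library's subpath, which is restricted to normed vector spaces.\<close>

definition path_segment :: "real \<Rightarrow> real \<Rightarrow> (real \<Rightarrow> 'a) \<Rightarrow> real \<Rightarrow> 'a" where
  "path_segment u v p = (\<lambda>t. p ((v - u) * t + u))"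

lemma path_segment_0_1 [simp]: "path_segment 0 1 p = p"
  by (simp add: path_segment_def)

lemma same_on01_path_segment:
  assumes "u \<le> v" and "\<And>t. t \<in> {u..v} \<Longrightarrow> p t = q t"
  shows "same_on01 (path_segment u v p) (path_segment u v q)"
proof -
  have "(v - u) * t + u \<in> {u..v}" if "t \<in> {0..1}" for t
    using that assms(1) mult_left_le[of t "v - u"] by auto
  then show ?thesis
    using assms(2) by (simp add: same_on01_def path_segment_def)
qed

lemma affine_combination_in_unit_interval:
  assumes "u \<in> {0..1}" "v \<in> {0..1}" "w \<in> {0..1}" and "(a, b) \<in> simplex2"
  shows "u + a * (v - u) + b * (w - u) \<in> {0..(1::real)}"
proof -
  have ab: "0 \<le> a" "0 \<le> b" "0 \<le> 1 - a - b" using assms(4) by (auto simp: simplex2_def)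
  have "u + a * (v - u) + b * (w - u) = (1 - a - b) * u + a * v + b * w"
    by (simp add: algebra_simps)
  moreover have "(1 - a - b) * u \<le> 1 - a - b" "a * v \<le> a" "b * w \<le> b"
    using assms ab by (auto intro: mult_left_le)
  ultimately show ?thesis
    using assms ab by auto
qed

lemma is_boundary1_path_segment_triangle:
  assumes "path p" "path_image p \<subseteq> X" and "u \<in> {0..1}" "v \<in> {0..1}" "w \<in> {0..1}"
  shows "is_boundary1 X
    (\<lambda>\<tau>. coef1 (path_segment u v p) \<tau> + coef1 (path_segment v w p) \<tau>
          - coef1 (path_segment u w p) \<tau>)"
proof -
  define \<sigma> where "\<sigma> = (\<lambda>(a, b). p (u + a * (v - u) + b * (w - u)))"
  have in01: "u + a * (v - u) + b * (w - u) \<in> {0..1}" if "(a, b) \<in> simplex2" for a b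
    using affine_combination_in_unit_interval[OF assms(3-5) that] .
  have "continuous_on simplex2 \<sigma>"
    unfolding \<sigma>_def split_def
    by (rule continuous_on_compose2[of "{0..1}" p])
       (use assms(1) in01 in \<open>auto simp: path_def intro!: continuous_intros\<close>)
  moreover have "\<sigma> ` simplex2 \<subseteq> X"
    using assms(2) in01 by (auto simp: \<sigma>_def path_image_def)
  moreover have "face0 \<sigma> = path_segment v w p" "face1 \<sigma> = path_segment u w p"
    "face2 \<sigma> = path_segment u v p"
    by (auto simp: \<sigma>_def face0_def face1_def face2_def path_segment_def algebra_simps)
  ultimately show ?thesis
    unfolding is_boundary1_def
    by (intro exI[of _ "[(\<sigma>, 1)]"]) (auto simp: bd2_coef_def)
qed

lemma is_boundary1_const: "x \<in> X \<Longrightarrow> is_boundary1 X (coef1 (\<lambda>_. x))"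
  using is_boundary1_path_segment_triangle[of "\<lambda>_. x" X 0 0 0]
  by (simp add: path_segment_def path_def)

lemma is_boundary1_path_segment_split3:
  assumes "path p" "path_image p \<subseteq> X" and "a \<in> {0..1}" "b \<in> {0..1}"
  shows "is_boundary1 X (\<lambda>\<tau>. coef1 (path_segment 0 a p) \<tau> + coef1 (path_segment a b p) \<tau>
                             + coef1 (path_segment b 1 p) \<tau> - coef1 p \<tau>)"
  using is_boundary1_add[OF is_boundary1_path_segment_triangle[OF assms(1,2), of 0 a 1]
                            is_boundary1_path_segment_triangle[OF assms(1,2), of a b 1]] assms(3,4)
  by (simp add: algebra_simps)

lemma homologous_middle_path_segments:
  assumes "path p" "path_image p \<subseteq> X" "path q" "path_image q \<subseteq> X"
    and "a \<in> {0..1}" "b \<in> {0..1}"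
    and "same_on01 (path_segment 0 a p) (path_segment 0 a q)"
    and "same_on01 (path_segment b 1 p) (path_segment b 1 q)"
    and "homologous X p q"
  shows "homologous X (path_segment a b p) (path_segment a b q)"
proof -
  have "is_boundary1 X (\<lambda>\<tau>. (coef1 (path_segment 0 a p) \<tau> + coef1 (path_segment a b p) \<tau>
                             + coef1 (path_segment b 1 p) \<tau> - coef1 p \<tau>)
                      - (coef1 (path_segment 0 a q) \<tau> + coef1 (path_segment a b q) \<tau>
                             + coef1 (path_segment b 1 q) \<tau> - coef1 q \<tau>)
                      + (coef1 p \<tau> - coef1 q \<tau>))"
    using assms(9) unfolding homologous_def
    by (intro is_boundary1_add[OF is_boundary1_diff] is_boundary1_path_segment_split3 assms(1-6))
  then show ?thesis
    unfolding homologous_def by (simp add: coef1_cong[OF assms(7)] coef1_cong[OF assms(8)])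
qed

lemma homologous_sym: "homologous X p q \<Longrightarrow> homologous X q p"
  unfolding homologous_def using is_boundary1_uminus by fastforce

lemma nulhomologous_if_homologous_const:
  "x \<in> X \<Longrightarrow> homologous X p (\<lambda>_. x) \<Longrightarrow> nulhomologous X p"
  unfolding homologous_def nulhomologous_def
  using is_boundary1_add[OF _ is_boundary1_const] by fastforce

section \<open>The infinite concatenation\<close>

definition concat_knot :: "nat \<Rightarrow> real" where
  "concat_knot n = 1 - (1/2)^n"

definition concat_piece :: "'a \<Rightarrow> (nat \<Rightarrow> real \<Rightarrow> 'a) \<Rightarrow> (nat \<Rightarrow> bool) \<Rightarrow> nat \<Rightarrow> real \<Rightarrow> 'a" where
  "concat_piece x f \<alpha> n = (if \<alpha> n then f n else (\<lambda>_. x))"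

lemma concat_knot_le_iff [simp]: "concat_knot m \<le> concat_knot n \<longleftrightarrow> m \<le> n"
  by (simp add: concat_knot_def)

lemma concat_knot_less_iff [simp]: "concat_knot m < concat_knot n \<longleftrightarrow> m < n"
  by (simp add: concat_knot_def)

lemma concat_knot_eq_iff [simp]: "concat_knot m = concat_knot n \<longleftrightarrow> m = n"
  by (metis concat_knot_le_iff order.eq_iff)

lemma concat_knot_nonneg: "0 \<le> concat_knot n"
  by (simp add: concat_knot_def power_le_one)

lemma concat_knot_less_1: "concat_knot n < 1"
  by (simp add: concat_knot_def)

lemma concat_knot_Suc: "concat_knot (Suc n) = concat_knot n + (1/2)^Suc n"
  by (simp add: concat_knot_def)

lemma unit_interval_concat_cases:
  assumes "t \<in> {0..1}"
  obtains "t = 1" | n where "concat_knot n \<le> t" "t < concat_knot (Suc n)"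
proof (cases "t = 1")
  case False
  then have "t < 1" using assms by simp
  then obtain k where "(1/2::real)^k < 1 - t"
    using real_arch_pow_inv[of "1 - t" "1/2"] by auto
  then have ex: "\<exists>k. t < concat_knot k"
    unfolding concat_knot_def by (intro exI[of _ k]) linarith
  define n where "n = (LEAST k. t < concat_knot k)"
  have "t < concat_knot n" unfolding n_def by (rule LeastI_ex[OF ex])
  moreover have "n \<noteq> 0" using calculation assms by (cases n) (auto simp: concat_knot_def)
  then obtain m where "n = Suc m" using not0_implies_Suc by blast
  moreover have "\<not> t < concat_knot m" using calculation n_def not_less_Least by (metis lessI)
  ultimately show ?thesis using that(2)[of m] by auto
qed

lemma concat_local_param_in_unit:
  assumes "concat_knot n \<le> t" "t \<le> concat_knot (Suc n)"
  shows "2^Suc n * (t - concat_knot n) \<in> {0..(1::real)}"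
proof -
  have "2^Suc n * (t - concat_knot n) \<le> 2^Suc n * (1/2::real)^Suc n"
    using assms by (intro mult_left_mono) (auto simp: concat_knot_Suc)
  then show ?thesis
    using assms by (simp add: power_one_over)
qed

lemma inf_concat_at_1 [simp]: "inf_concat x f \<alpha> 1 = x"
  by (simp add: inf_concat_def)

lemma concat_piece_0: "pathstart (f n) = x \<Longrightarrow> concat_piece x f \<alpha> n 0 = x"
  by (simp add: concat_piece_def pathstart_def)

lemma concat_piece_1: "pathfinish (f n) = x \<Longrightarrow> concat_piece x f \<alpha> n 1 = x"
  by (simp add: concat_piece_def pathfinish_def)

text \<open>Adjacent intervals share an endpoint, where both pieces take the value x, so the
  choice in the definition of \<^const>\<open>inf_concat\<close> is determined.\<close>

lemma inf_concat_eq: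
  assumes "\<And>n. pathstart (f n) = x" "\<And>n. pathfinish (f n) = x"
    and "concat_knot n \<le> t" "t \<le> concat_knot (Suc n)"
  shows "inf_concat x f \<alpha> t = concat_piece x f \<alpha> n (2^Suc n * (t - concat_knot n))"
proof -
  let ?v = "\<lambda>m. concat_piece x f \<alpha> m (2^Suc m * (t - concat_knot m))"
  have at_knot: "?v m = x" "?v (Suc m) = x" if "t = concat_knot (Suc m)" for m
    using that concat_piece_0[OF assms(1)] concat_piece_1[OF assms(2)]
    by (simp_all add: concat_knot_Suc power_one_over)
  have overlap: "n = Suc m \<and> t = concat_knot n"
    if "concat_knot n \<le> t" "t \<le> concat_knot (Suc m)" "m < n" for m n
  proof -
    have "concat_knot (Suc m) \<le> concat_knot n" using that(3) by simp
    then have "t = concat_knot n" "concat_knot n = concat_knot (Suc m)"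
      using that(1,2) by linarith+
    then show ?thesis by simp
  qed
  have unique: "?v m = ?v n" if "concat_knot m \<le> t" "t \<le> concat_knot (Suc m)" for m
  proof -
    consider "m < n" | "m = n" | "n < m" by linarith
    then show ?thesis
    proof cases
      case 1
      with overlap[OF assms(3) that(2)] at_knot show ?thesis by auto
    next
      case 3
      with overlap[OF that(1) assms(4)] at_knot show ?thesis by auto
    qed simp
  qed
  have "t \<noteq> 1" using assms(4) concat_knot_less_1[of "Suc n"] by auto
  then have "inf_concat x f \<alpha> t
      = (SOME v. \<exists>m. concat_knot m \<le> t \<and> t \<le> concat_knot (Suc m) \<and> v = ?v m)"
    unfolding inf_concat_def concat_knot_def concat_piece_def by (simp only: if_not_P if_False)
  also have "\<dots> = ?v n"
  proof (rule some_equality)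
    show "\<exists>m. concat_knot m \<le> t \<and> t \<le> concat_knot (Suc m) \<and> ?v n = ?v m"
      using assms(3,4) by blast
  qed (use unique in blast)
  finally show ?thesis .
qed

locale null_loop_sequence =
  fixes X :: "'a::metric_space set" and x :: 'a and f :: "nat \<Rightarrow> real \<Rightarrow> 'a"
  assumes base_in_X: "x \<in> X"
    and loop_path: "\<And>n. path (f n)" and loop_image: "\<And>n. path_image (f n) \<subseteq> X"
    and loop_start: "\<And>n. pathstart (f n) = x" and loop_finish: "\<And>n. pathfinish (f n) = x"
    and loop_diameter: "\<And>n. diameter (path_image (f n)) \<le> (1/2)^n"
begin

lemma inf_concat_piece:
  "concat_knot n \<le> t \<Longrightarrow> t \<le> concat_knot (Suc n) \<Longrightarrow>
    inf_concat x f \<alpha> t = concat_piece x f \<alpha> n (2^Suc n * (t - concat_knot n))"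
  using inf_concat_eq[OF loop_start loop_finish] .

lemma path_concat_piece: "path (concat_piece x f \<alpha> n)"
  using loop_path by (simp add: concat_piece_def path_def)

lemma concat_piece_in_X: "s \<in> {0..1} \<Longrightarrow> concat_piece x f \<alpha> n s \<in> X"
  using loop_image[of n] base_in_X by (auto simp: concat_piece_def path_image_def)

lemma dist_concat_piece_base:
  assumes "s \<in> {0..1}"
  shows "dist (concat_piece x f \<alpha> n s) x \<le> (1/2)^n"
proof -
  have "dist (f n s) (f n 0) \<le> diameter (path_image (f n))"
    using assms bounded_path_image[OF loop_path]
    by (intro diameter_bounded_bound) (auto simp: path_image_def)
  then show ?thesis
    using loop_diameter[of n] loop_start[of n] by (simp add: concat_piece_def pathstart_def)
qed

lemma inf_concat_in_piece_image:
  assumes "concat_knot n \<le> t" "t \<le> concat_knot (Suc n)"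
  obtains s where "s \<in> {0..1}" "inf_concat x f \<alpha> t = concat_piece x f \<alpha> n s"
  using assms inf_concat_piece concat_local_param_in_unit by blast

lemma inf_concat_in_X:
  assumes "t \<in> {0..1}"
  shows "inf_concat x f \<alpha> t \<in> X"
  using assms
proof (cases rule: unit_interval_concat_cases)
  case (2 n)
  then show ?thesis
    by (metis inf_concat_in_piece_image concat_piece_in_X less_imp_le)
qed (simp add: base_in_X)

lemma dist_inf_concat_base:
  assumes "concat_knot n \<le> t" "t \<le> 1"
  shows "dist (inf_concat x f \<alpha> t) x \<le> (1/2)^n"
proof -
  have "t \<in> {0..1}" using assms concat_knot_nonneg[of n] by simp
  then show ?thesis
  proof (cases rule: unit_interval_concat_cases)
    case (2 m)
    then have "concat_knot n < concat_knot (Suc m)" using assms(1) by linarith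
    then have "n \<le> m" by simp
    have "dist (inf_concat x f \<alpha> t) x \<le> (1/2)^m"
      using 2 by (metis inf_concat_in_piece_image dist_concat_piece_base less_imp_le)
    also have "\<dots> \<le> (1/2)^n" using \<open>n \<le> m\<close> by (simp add: power_decreasing)
    finally show ?thesis .
  qed simp
qed

lemma continuous_on_inf_concat_initial: "continuous_on {0..concat_knot n} (inf_concat x f \<alpha>)"
proof (induction n)
  case 0
  have "{0..concat_knot 0} = {0}" by (simp add: concat_knot_def)
  then show ?case by (simp only: continuous_on_sing)
next
  case (Suc n)
  have "continuous_on {0..1} (concat_piece x f \<alpha> n)"
    using path_concat_piece by (simp add: path_def)
  moreover have "continuous_on {concat_knot n..concat_knot (Suc n)}
      (\<lambda>t. 2^Suc n * (t - concat_knot n))"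
    by (intro continuous_intros)
  moreover have
    "(\<lambda>t. 2^Suc n * (t - concat_knot n)) ` {concat_knot n..concat_knot (Suc n)} \<subseteq> {0..1}"
    using concat_local_param_in_unit by auto
  ultimately have "continuous_on {concat_knot n..concat_knot (Suc n)}
      (\<lambda>t. concat_piece x f \<alpha> n (2^Suc n * (t - concat_knot n)))"
    by (rule continuous_on_compose2)
  then have "continuous_on {concat_knot n..concat_knot (Suc n)} (inf_concat x f \<alpha>)"
    by (rule continuous_on_eq) (simp add: inf_concat_piece[of n])
  moreover have
    "{0..concat_knot (Suc n)} = {0..concat_knot n} \<union> {concat_knot n..concat_knot (Suc n)}"
    by (simp add: ivl_disj_un_two_touch(4) concat_knot_nonneg)
  ultimately show ?case
    using continuous_on_closed_Un[OF _ _ Suc.IH] by simp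
qed

lemma path_inf_concat: "path (inf_concat x f \<alpha>)"
  unfolding path_def continuous_on_eq_continuous_within
proof
  fix t :: real
  assume "t \<in> {0..1}"
  then show "continuous (at t within {0..1}) (inf_concat x f \<alpha>)"
  proof (cases rule: unit_interval_concat_cases)
    case 1
    have "\<forall>\<^sub>F s in at 1 within {0..1}. dist (inf_concat x f \<alpha> s) x < e" if "e > 0" for e
    proof -
      obtain n where n: "(1/2::real)^n < e"
        using real_arch_pow_inv[of e "1/2"] \<open>e > 0\<close> by auto
      have "dist (inf_concat x f \<alpha> s) x < e"
        if "s \<in> {0..1}" "dist s 1 < (1/2)^n" for s
      proof -
        have "concat_knot n \<le> s" using that by (simp add: concat_knot_def dist_real_def)
        then have "dist (inf_concat x f \<alpha> s) x \<le> (1/2)^n"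
          using that(1) by (intro dist_inf_concat_base) auto
        with n show ?thesis by linarith
      qed
      then show ?thesis
        unfolding eventually_at by (intro exI[of _ "(1/2)^n"]) auto
    qed
    then show ?thesis
      using 1 by (simp add: continuous_within tendsto_iff)
  next
    case (2 n)
    have "at t within {0..1} = at t within {0..concat_knot (Suc n)}"
      using 2 concat_knot_less_1[of "Suc n"]
      by (intro at_within_nhd[of _ "{..<concat_knot (Suc n)}"]) auto
    moreover have "t \<in> {0..concat_knot (Suc n)}"
      using 2 concat_knot_nonneg[of n] by simp
    then have "continuous (at t within {0..concat_knot (Suc n)}) (inf_concat x f \<alpha>)"
      using continuous_on_inf_concat_initial continuous_on_eq_continuous_within by blast
    ultimately show ?thesis by simp
  qed
qed

lemma path_image_inf_concat: "path_image (inf_concat x f \<alpha>) \<subseteq> X"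
  using inf_concat_in_X by (auto simp: path_image_def)

lemma inf_concat_middle_segment:
  "same_on01 (path_segment (concat_knot n) (concat_knot (Suc n)) (inf_concat x f \<alpha>))
             (concat_piece x f \<alpha> n)"
proof (unfold same_on01_def, intro ballI)
  fix s :: real
  assume s: "s \<in> {0..1}"
  let ?t = "(1/2)^Suc n * s + concat_knot n"
  have "path_segment (concat_knot n) (concat_knot (Suc n)) (inf_concat x f \<alpha>) s
      = inf_concat x f \<alpha> ?t"
    by (simp add: path_segment_def concat_knot_Suc)
  also have "\<dots> = concat_piece x f \<alpha> n (2^Suc n * (?t - concat_knot n))"
    using s by (intro inf_concat_piece) (auto simp: concat_knot_Suc mult_left_le)
  also have "2^Suc n * (?t - concat_knot n) = s"
    by (simp add: power_one_over)
  finally show "path_segment (concat_knot n) (concat_knot (Suc n)) (inf_concat x f \<alpha>) s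
      = concat_piece x f \<alpha> n s" .
qed

lemma inf_concat_eq_below:
  assumes "\<And>m. m < n \<Longrightarrow> \<alpha> m = \<beta> m" and "t \<in> {0..concat_knot n}"
  shows "inf_concat x f \<alpha> t = inf_concat x f \<beta> t"
proof -
  have "t \<in> {0..1}" using assms(2) concat_knot_less_1[of n] by simp
  then show ?thesis
  proof (cases rule: unit_interval_concat_cases)
    case 1
    then show ?thesis using assms(2) concat_knot_less_1[of n] by simp
  next
    case (2 m)
    moreover have "t \<le> concat_knot n" using assms(2) by simp
    ultimately have "concat_knot m \<le> concat_knot n" by linarith
    then have "m \<le> n" by simp
    then consider "m < n" | "m = n" by linarith
    then show ?thesis
    proof cases
      case 1
      then show ?thesis using 2 assms(1) by (simp add: inf_concat_piece[of m] concat_piece_def)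
    next
      case 2
      then have "t = concat_knot n" using \<open>concat_knot m \<le> t\<close> assms(2) by simp
      then show ?thesis
        using inf_concat_piece[of n t] concat_piece_0[OF loop_start] by simp
    qed
  qed
qed

lemma inf_concat_eq_above:
  assumes "\<And>m. n < m \<Longrightarrow> \<alpha> m = \<beta> m" and "t \<in> {concat_knot (Suc n)..1}"
  shows "inf_concat x f \<alpha> t = inf_concat x f \<beta> t"
proof -
  have "t \<in> {0..1}" using assms(2) concat_knot_nonneg[of "Suc n"] by simp
  then show ?thesis
  proof (cases rule: unit_interval_concat_cases)
    case (2 m)
    moreover have "concat_knot (Suc n) \<le> t" using assms(2) by simp
    ultimately have "concat_knot (Suc n) < concat_knot (Suc m)" by linarith
    then have "n < m" by simp
    then show ?thesis using 2 assms(1) by (simp add: inf_concat_piece[of m] concat_piece_def)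
  qed simp
qed

lemma not_homologous_inf_concat_if_differ_once:
  assumes differ: "{m. \<alpha> m \<noteq> \<beta> m} = {n}" and "\<not> nulhomologous X (f n)"
  shows "\<not> homologous X (inf_concat x f \<alpha>) (inf_concat x f \<beta>)"
proof
  assume hom: "homologous X (inf_concat x f \<alpha>) (inf_concat x f \<beta>)"
  have agree: "\<alpha> m = \<beta> m" if "m \<noteq> n" for m
    using differ that by blast
  have "same_on01 (path_segment 0 (concat_knot n) (inf_concat x f \<alpha>))
                 (path_segment 0 (concat_knot n) (inf_concat x f \<beta>))"
    using agree concat_knot_nonneg
    by (intro same_on01_path_segment inf_concat_eq_below[of n]) auto
  moreover have "same_on01 (path_segment (concat_knot (Suc n)) 1 (inf_concat x f \<alpha>))
                          (path_segment (concat_knot (Suc n)) 1 (inf_concat x f \<beta>))"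
    using agree concat_knot_less_1
    by (intro same_on01_path_segment inf_concat_eq_above[of n] less_imp_le) auto
  ultimately have "homologous X
      (path_segment (concat_knot n) (concat_knot (Suc n)) (inf_concat x f \<alpha>))
      (path_segment (concat_knot n) (concat_knot (Suc n)) (inf_concat x f \<beta>))"
    using hom concat_knot_nonneg concat_knot_less_1 less_imp_le
    by (intro homologous_middle_path_segments path_inf_concat path_image_inf_concat) auto
  then have "homologous X (concat_piece x f \<alpha> n) (concat_piece x f \<beta> n)"
    by (simp add: homologous_def coef1_cong[OF inf_concat_middle_segment])
  moreover have "\<alpha> n \<noteq> \<beta> n" using differ by blast
  ultimately have "homologous X (f n) (\<lambda>_. x)"
    by (cases "\<alpha> n") (auto simp: concat_piece_def dest: homologous_sym)
  then show False
    using assms(2) base_in_X nulhomologous_if_homologous_const by blast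
qed

end

section \<open>Boundary certificates\<close>

text \<open>Products and non-strict inequalities make this a closed condition on (\<mu>, g).\<close>

definition has_modulus_on :: "'a::metric_space set \<Rightarrow> (nat \<Rightarrow> real) \<Rightarrow> ('a \<Rightarrow> 'b::metric_space) \<Rightarrow> bool"
  where "has_modulus_on S \<mu> g \<longleftrightarrow>
    (\<forall>k. \<forall>q\<in>S. \<forall>r\<in>S. 1 \<le> dist q r * \<mu> k \<or> dist (g q) (g r) \<le> inverse (real (Suc k)))"

lemma has_modulus_on_imp_uniformly_continuous:
  assumes "has_modulus_on S \<mu> g"
  shows "uniformly_continuous_on S g"
  unfolding uniformly_continuous_on_def
proof (intro allI impI)
  fix e :: real
  assume "0 < e"
  then obtain k where k: "inverse (real (Suc k)) < e"
    using reals_Archimedean by blast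
  define d where "d = inverse (\<bar>\<mu> k\<bar> + 1)"
  have "dist (g r) (g q) < e" if "q \<in> S" "r \<in> S" "dist r q < d" for q r
  proof -
    have "dist q r * \<mu> k \<le> dist q r * \<bar>\<mu> k\<bar>"
      by (intro mult_left_mono) auto
    also have "\<dots> \<le> dist q r * (\<bar>\<mu> k\<bar> + 1)"
      by (intro mult_left_mono) auto
    also have "\<dots> < d * (\<bar>\<mu> k\<bar> + 1)"
      using that(3) by (intro mult_strict_right_mono) (auto simp: dist_commute add_pos_nonneg)
    also have "\<dots> = 1"
      by (simp add: d_def add_pos_nonneg)
    finally have "\<not> 1 \<le> dist q r * \<mu> k" by simp
    then have "dist (g q) (g r) \<le> inverse (real (Suc k))"
      using assms that(1,2) unfolding has_modulus_on_def by blast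
    with k show ?thesis by (simp add: dist_commute)
  qed
  moreover have "d > 0" by (simp add: d_def add_pos_nonneg)
  ultimately show "\<exists>d>0. \<forall>q\<in>S. \<forall>r\<in>S. dist r q < d \<longrightarrow> dist (g r) (g q) < e"
    by blast
qed

lemma uniformly_continuous_family_has_modulus_on:
  assumes "finite I" and "\<And>i. i \<in> I \<Longrightarrow> uniformly_continuous_on S (g i)"
  shows "\<exists>\<mu>. \<forall>i\<in>I. has_modulus_on S \<mu> (g i)"
proof -
  have "\<forall>i\<in>I. \<forall>k. \<exists>d>0. \<forall>q\<in>S. \<forall>r\<in>S. dist r q < d \<longrightarrow> dist (g i r) (g i q) < inverse (real (Suc k))"
    using assms(2) unfolding uniformly_continuous_on_def by simp
  then obtain \<delta> where \<delta>: "\<And>i k. i \<in> I \<Longrightarrow> \<delta> i k > 0"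
    "\<And>i k q r. i \<in> I \<Longrightarrow> q \<in> S \<Longrightarrow> r \<in> S \<Longrightarrow> dist r q < \<delta> i k
       \<Longrightarrow> dist (g i r) (g i q) < inverse (real (Suc k))"
    by metis
  define \<mu> where "\<mu> k = (\<Sum>i\<in>I. inverse (\<delta> i k))" for k
  have "has_modulus_on S \<mu> (g i)" if "i \<in> I" for i
    unfolding has_modulus_on_def
  proof (intro allI ballI)
    fix k q r
    assume qr: "q \<in> S" "r \<in> S"
    show "1 \<le> dist q r * \<mu> k \<or> dist (g i q) (g i r) \<le> inverse (real (Suc k))"
    proof (cases "1 \<le> dist q r * \<mu> k")
      case False
      moreover have "dist q r * inverse (\<delta> i k) \<le> dist q r * \<mu> k"
        unfolding \<mu>_def using assms(1) that \<delta>(1)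
        by (intro mult_left_mono member_le_sum) (auto intro: less_imp_le)
      ultimately have "dist q r * inverse (\<delta> i k) < 1"
        by linarith
      then have "dist q r < \<delta> i k"
        using \<delta>(1)[OF that, of k] by (simp add: field_simps)
      then show ?thesis
        using \<delta>(2)[OF that qr(2,1)] by (simp add: dist_commute less_imp_le)
    qed simp
  qed
  then show ?thesis by blast
qed

definition cancelling_labelling :: "nat \<Rightarrow> (nat \<Rightarrow> int) \<Rightarrow> (nat \<Rightarrow> real \<Rightarrow> 'a) \<Rightarrow> nat list \<Rightarrow> bool"
  where "cancelling_labelling N W P labs \<longleftrightarrow>
    (\<forall>u<N. \<forall>v<N. labs ! u = labs ! v \<longrightarrow> same_on01 (P u) (P v)) \<and>
    (\<forall>l. (\<Sum>u | u < N \<and> labs ! u = l. W u) = 0)"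

lemma same_on01_trans: "same_on01 p q \<Longrightarrow> same_on01 q r \<Longrightarrow> same_on01 p r"
  by (simp add: same_on01_def)

lemma same_on01_sym: "same_on01 p q \<Longrightarrow> same_on01 q p"
  by (simp add: same_on01_def)

lemma sum_coef1_eq_sum_same_on01:
  fixes N :: nat
  shows "(\<Sum>u<N. W u * coef1 (P u) \<tau>) = (\<Sum>u | u < N \<and> same_on01 (P u) \<tau>. W u)"
proof -
  have "(\<Sum>u<N. W u * coef1 (P u) \<tau>) = (\<Sum>u<N. if same_on01 (P u) \<tau> then W u else 0)"
    by (intro sum.cong) (auto simp: coef1_def)
  also have "\<dots> = sum W {u \<in> {..<N}. same_on01 (P u) \<tau>}"
    by (rule sum.inter_filter[symmetric]) simp
  also have "{u \<in> {..<N}. same_on01 (P u) \<tau>} = {u. u < N \<and> same_on01 (P u) \<tau>}"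
    by auto
  finally show ?thesis .
qed

lemma cancelling_labelling_imp_sum_coef1_eq_0:
  assumes "cancelling_labelling N W P labs"
  shows "(\<Sum>u<N. W u * coef1 (P u) \<tau>) = 0"
proof -
  define U where "U = {u. u < N \<and> same_on01 (P u) \<tau>}"
  have class_in_U: "{u \<in> U. labs ! u = labs ! v} = {u. u < N \<and> labs ! u = labs ! v}"
    if "v \<in> U" for v
    using assms that unfolding U_def cancelling_labelling_def by (blast intro: same_on01_trans)
  have "(\<Sum>u<N. W u * coef1 (P u) \<tau>) = (\<Sum>u\<in>U. W u)"
    unfolding U_def by (rule sum_coef1_eq_sum_same_on01)
  also have "\<dots> = (\<Sum>l\<in>(\<lambda>u. labs ! u) ` U. \<Sum>u | u \<in> U \<and> labs ! u = l. W u)"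
    by (rule sum.group[symmetric]) (auto simp: U_def)
  also have "\<dots> = 0"
    using assms class_in_U by (intro sum.neutral) (auto simp: cancelling_labelling_def)
  finally show ?thesis .
qed

lemma sum_coef1_eq_0_imp_cancelling_labelling:
  assumes "\<And>\<tau>. (\<Sum>u<N. W u * coef1 (P u) \<tau>) = 0"
  shows "cancelling_labelling N W P (map (\<lambda>u. LEAST v. same_on01 (P v) (P u)) [0..<N])"
proof -
  let ?rep = "\<lambda>u. LEAST v. same_on01 (P v) (P u)"
  have rep_same: "same_on01 (P (?rep u)) (P u)" for u
    by (rule LeastI[of _ u]) (simp add: same_on01_def)
  have rep_eq_iff: "?rep u = ?rep v \<longleftrightarrow> same_on01 (P u) (P v)" for u v
  proof
    assume "?rep u = ?rep v"
    then show "same_on01 (P u) (P v)"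
      using rep_same[of u] rep_same[of v] by (metis same_on01_sym same_on01_trans)
  next
    assume "same_on01 (P u) (P v)"
    then have "same_on01 (P w) (P u) \<longleftrightarrow> same_on01 (P w) (P v)" for w
      by (meson same_on01_sym same_on01_trans)
    then show "?rep u = ?rep v" by simp
  qed
  have "(\<Sum>u | u < N \<and> ?rep u = l. W u) = 0" for l
  proof (cases "\<exists>v<N. ?rep v = l")
    case True
    then obtain v where "v < N" and l: "?rep v = l" by blast
    have "{u. u < N \<and> ?rep u = l} = {u. u < N \<and> same_on01 (P u) (P v)}"
      unfolding l[symmetric] rep_eq_iff ..
    then show ?thesis
      using assms[of "P v"] sum_coef1_eq_sum_same_on01[where \<tau> = "P v"] by simp
  next
    case False
    then have "{u. u < N \<and> ?rep u = l} = {}" by auto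
    then show ?thesis by (simp only: sum.empty)
  qed
  then show ?thesis
    using rep_eq_iff by (simp add: cancelling_labelling_def cong: conj_cong)
qed

lemma sum_coef1_eq_0_iff_cancelling_labelling:
  "(\<forall>\<tau>. (\<Sum>u<N. W u * coef1 (P u) \<tau>) = 0) \<longleftrightarrow> (\<exists>labs. cancelling_labelling N W P labs)"
  using cancelling_labelling_imp_sum_coef1_eq_0 sum_coef1_eq_0_imp_cancelling_labelling by metis

text \<open>Enumeration of the terms of the 1-chain \<partial>(\<Sum>k_i w_i) - g + h: the three faces of
  each w_i, then g, then h.\<close>

definition chain_term :: "nat \<Rightarrow> (nat \<Rightarrow> real \<times> real \<Rightarrow> 'a) \<Rightarrow> (real \<Rightarrow> 'a) \<Rightarrow> (real \<Rightarrow> 'a) \<Rightarrow>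
    nat \<Rightarrow> real \<Rightarrow> 'a"
  where "chain_term m w g h u =
    (if u < 3 * m
     then (if u mod 3 = 0 then face0 else if u mod 3 = 1 then face1 else face2) (w (u div 3))
     else if u = 3 * m then g else h)"

definition chain_weight :: "int list \<Rightarrow> nat \<Rightarrow> int"
  where "chain_weight ks u =
    (if u < 3 * length ks then (if u mod 3 = 1 then - (ks ! (u div 3)) else ks ! (u div 3))
     else if u = 3 * length ks then -1 else 1)"

lemma sum_chain_terms:
  "(\<Sum>u<3 * length ks + 2. chain_weight ks u * coef1 (chain_term (length ks) w g h u) \<tau>)
   = (\<Sum>i<length ks. ks ! i * bd2_coef (w i) \<tau>) - coef1 g \<tau> + coef1 h \<tau>"
proof -
  let ?F = "\<lambda>u. chain_weight ks u * coef1 (chain_term (length ks) w g h u) \<tau>"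
  have "(\<Sum>u<3 * length ks. ?F u) = (\<Sum>i<length ks. \<Sum>u\<in>{i * 3..<i * 3 + 3}. ?F u)"
    by (simp add: sum.nat_group mult.commute)
  also have "\<dots> = (\<Sum>i<length ks. ks ! i * bd2_coef (w i) \<tau>)"
  proof (rule sum.cong)
    fix i
    assume "i \<in> {..<length ks}"
    moreover have "{i * 3..<i * 3 + 3} = {i * 3, Suc (i * 3), Suc (Suc (i * 3))}" by auto
    moreover have "i * 3 mod 3 = 0" "i * 3 div 3 = i" "Suc (i * 3) mod 3 = 1"
      "Suc (i * 3) div 3 = i" "Suc (Suc (i * 3)) mod 3 = 2" "Suc (Suc (i * 3)) div 3 = i"
      by presburger+
    ultimately show "(\<Sum>u\<in>{i * 3..<i * 3 + 3}. ?F u) = ks ! i * bd2_coef (w i) \<tau>"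
      by (simp add: chain_weight_def chain_term_def bd2_coef_def algebra_simps)
  qed simp
  finally show ?thesis
    by (simp add: chain_weight_def chain_term_def)
qed

lemma bd2_coef_restrict: "bd2_coef (restrict \<sigma> simplex2) = bd2_coef \<sigma>"
proof -
  have "same_on01 (face0 (restrict \<sigma> simplex2)) (face0 \<sigma>)"
    "same_on01 (face1 (restrict \<sigma> simplex2)) (face1 \<sigma>)"
    "same_on01 (face2 (restrict \<sigma> simplex2)) (face2 \<sigma>)"
    by (auto simp: same_on01_def face0_def face1_def face2_def simplex2_def)
  then show ?thesis
    by (simp add: bd2_coef_def coef1_cong fun_eq_iff)
qed

lemma compact_simplex2: "compact simplex2"
proof (unfold compact_eq_bounded_closed, intro conjI)
  have "simplex2 \<subseteq> cbox (0, 0) (1, 1)"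
    by (auto simp: simplex2_def cbox_Pair_eq)
  then show "bounded simplex2"
    using bounded_cbox bounded_subset by blast
  have eq: "simplex2 = {p. 0 \<le> fst p} \<inter> {p. 0 \<le> snd p} \<inter> {p. fst p + snd p \<le> 1}"
    by (auto simp: simplex2_def)
  show "closed simplex2"
    unfolding eq by (intro closed_Int closed_Collect_le continuous_intros)
qed

lemma is_boundary1_iff_indexed:
  assumes "X \<noteq> {}"
  shows "is_boundary1 X c \<longleftrightarrow>
    (\<exists>ks w. (\<forall>i. w i \<in> simplex2 \<rightarrow>\<^sub>E X) \<and> (\<forall>i<length ks. continuous_on simplex2 (w i)) \<and>
            (\<forall>\<tau>. c \<tau> = (\<Sum>i<length ks. ks ! i * bd2_coef (w i) \<tau>)))"
proof
  assume "is_boundary1 X c"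
  then obtain S where S: "\<forall>(\<sigma>, k) \<in> set S. continuous_on simplex2 \<sigma> \<and> \<sigma> ` simplex2 \<subseteq> X"
    "\<forall>\<tau>. c \<tau> = (\<Sum>(\<sigma>, k) \<leftarrow> S. k * bd2_coef \<sigma> \<tau>)"
    unfolding is_boundary1_def by blast
  obtain x where "x \<in> X" using assms by blast
  define w where "w i = restrict (if i < length S then fst (S ! i) else (\<lambda>_. x)) simplex2" for i
  have "w i \<in> simplex2 \<rightarrow>\<^sub>E X" for i
    using S(1) nth_mem[of i S] \<open>x \<in> X\<close> by (fastforce simp: w_def case_prod_beta)
  moreover have "continuous_on simplex2 (w i)" if "i < length S" for i
    using S(1) nth_mem[OF that] that unfolding w_def
    by (auto simp: case_prod_beta intro: continuous_on_cong[THEN iffD1])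
  moreover have "c \<tau> = (\<Sum>i<length (map snd S). map snd S ! i * bd2_coef (w i) \<tau>)" for \<tau>
    using S(2)
    by (simp add: sum_list_sum_nth atLeast0LessThan case_prod_beta w_def bd2_coef_restrict)
  ultimately show "\<exists>ks w. (\<forall>i. w i \<in> simplex2 \<rightarrow>\<^sub>E X) \<and>
      (\<forall>i<length ks. continuous_on simplex2 (w i)) \<and>
      (\<forall>\<tau>. c \<tau> = (\<Sum>i<length ks. ks ! i * bd2_coef (w i) \<tau>))"
    by (intro exI[of _ "map snd S"] exI[of _ w]) auto
next
  assume "\<exists>ks w. (\<forall>i. w i \<in> simplex2 \<rightarrow>\<^sub>E X) \<and> (\<forall>i<length ks. continuous_on simplex2 (w i)) \<and>
            (\<forall>\<tau>. c \<tau> = (\<Sum>i<length ks. ks ! i * bd2_coef (w i) \<tau>))"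
  then obtain ks w where "\<forall>i. w i \<in> simplex2 \<rightarrow>\<^sub>E X" "\<forall>i<length ks. continuous_on simplex2 (w i)"
    "\<forall>\<tau>. c \<tau> = (\<Sum>i<length ks. ks ! i * bd2_coef (w i) \<tau>)"
    by blast
  then show "is_boundary1 X c"
    unfolding is_boundary1_def
    by (intro exI[of _ "map (\<lambda>i. (w i, ks ! i)) [0..<length ks]"])
       (auto simp: PiE_iff sum_list_sum_nth atLeast0LessThan)
qed

definition boundary_certificate :: "int list \<times> nat list \<Rightarrow> (nat \<Rightarrow> real) \<Rightarrow>
    (nat \<Rightarrow> real \<times> real \<Rightarrow> 'a::metric_space) \<Rightarrow> (real \<Rightarrow> 'a) \<Rightarrow> (real \<Rightarrow> 'a) \<Rightarrow> bool"
  where "boundary_certificate d \<mu> w g h \<longleftrightarrow>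
    (\<forall>i<length (fst d). has_modulus_on simplex2 \<mu> (w i)) \<and>
    cancelling_labelling (3 * length (fst d) + 2) (chain_weight (fst d))
      (chain_term (length (fst d)) w g h) (snd d)"

lemma continuous_on_simplex2_iff_has_modulus_on:
  fixes w :: "nat \<Rightarrow> real \<times> real \<Rightarrow> 'a::metric_space"
  shows "(\<forall>i<n. continuous_on simplex2 (w i)) \<longleftrightarrow> (\<exists>\<mu>. \<forall>i<n. has_modulus_on simplex2 \<mu> (w i))"
proof
  assume "\<forall>i<n. continuous_on simplex2 (w i)"
  then have "\<exists>\<mu>. \<forall>i\<in>{..<n}. has_modulus_on simplex2 \<mu> (w i)"
    using compact_uniformly_continuous compact_simplex2
    by (intro uniformly_continuous_family_has_modulus_on) auto
  then show "\<exists>\<mu>. \<forall>i<n. has_modulus_on simplex2 \<mu> (w i)"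
    by auto
qed (use has_modulus_on_imp_uniformly_continuous uniformly_continuous_imp_continuous in blast)

lemma homologous_iff_boundary_certificate:
  fixes g h :: "real \<Rightarrow> 'a::metric_space"
  assumes "X \<noteq> {}"
  shows "homologous X g h \<longleftrightarrow>
    (\<exists>d \<mu> w. (\<forall>i. w i \<in> simplex2 \<rightarrow>\<^sub>E X) \<and> boundary_certificate d \<mu> w g h)"
proof -
  have chain_iff:
    "(\<forall>\<tau>. coef1 g \<tau> - coef1 h \<tau> = (\<Sum>i<length ks. ks ! i * bd2_coef (w i) \<tau>)) \<longleftrightarrow>
     (\<exists>labs. cancelling_labelling (3 * length ks + 2) (chain_weight ks)
        (chain_term (length ks) w g h) labs)"
    for ks w
    unfolding sum_coef1_eq_0_iff_cancelling_labelling[symmetric] sum_chain_terms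
    by (intro iff_allI) linarith
  show ?thesis
    unfolding homologous_def is_boundary1_iff_indexed[OF assms] chain_iff
      continuous_on_simplex2_iff_has_modulus_on boundary_certificate_def
  proof (intro iffI; elim exE conjE)
    fix ks w \<mu> labs
    assume "\<forall>i. w i \<in> simplex2 \<rightarrow>\<^sub>E X" "\<forall>i<length ks. has_modulus_on simplex2 \<mu> (w i)"
      "cancelling_labelling (3 * length ks + 2) (chain_weight ks)
         (chain_term (length ks) w g h) labs"
    then show "\<exists>d \<mu> w. (\<forall>i. w i \<in> simplex2 \<rightarrow>\<^sub>E X) \<and>
      (\<forall>i<length (fst d). has_modulus_on simplex2 \<mu> (w i)) \<and>
      cancelling_labelling (3 * length (fst d) + 2) (chain_weight (fst d))
        (chain_term (length (fst d)) w g h) (snd d)"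
      by (intro exI[of _ "(ks, labs)"] exI[of _ \<mu>] exI[of _ w]) simp
  qed blast
qed

section \<open>Analyticity\<close>

lemma closedin_Collect_conj:
  assumes "closedin T {p \<in> topspace T. P p}" "closedin T {p \<in> topspace T. Q p}"
  shows "closedin T {p \<in> topspace T. P p \<and> Q p}"
proof -
  have "{p \<in> topspace T. P p \<and> Q p} = {p \<in> topspace T. P p} \<inter> {p \<in> topspace T. Q p}"
    by blast
  then show ?thesis using closedin_Int[OF assms] by simp
qed

lemma closedin_Collect_disj:
  assumes "closedin T {p \<in> topspace T. P p}" "closedin T {p \<in> topspace T. Q p}"
  shows "closedin T {p \<in> topspace T. P p \<or> Q p}"
proof -
  have "{p \<in> topspace T. P p \<or> Q p} = {p \<in> topspace T. P p} \<union> {p \<in> topspace T. Q p}"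
    by blast
  then show ?thesis using closedin_Un[OF assms] by simp
qed

lemma closedin_Collect_all:
  assumes "\<And>i. closedin T {p \<in> topspace T. P i p}"
  shows "closedin T {p \<in> topspace T. \<forall>i. P i p}"
proof -
  have "closedin T (\<Inter>i. {p \<in> topspace T. P i p})"
    by (rule closedin_Inter) (use assms in auto)
  moreover have "{p \<in> topspace T. \<forall>i. P i p} = (\<Inter>i. {p \<in> topspace T. P i p})"
    by auto
  ultimately show ?thesis by simp
qed

lemma closedin_Collect_const_imp:
  "(c \<Longrightarrow> closedin T {p \<in> topspace T. P p}) \<Longrightarrow> closedin T {p \<in> topspace T. c \<longrightarrow> P p}"
  by (cases c) auto

lemma closedin_Collect_const: "closedin T {p \<in> topspace T. c}"
  by (cases c) auto

lemma closedin_Collect_eq: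
  fixes g h :: "'b \<Rightarrow> 'a::metric_space"
  shows "continuous_map T euclidean g \<Longrightarrow> continuous_map T euclidean h \<Longrightarrow>
    closedin T {p \<in> topspace T. g p = h p}"
  by (rule closedin_continuous_maps_eq[OF Hausdorff_space_euclidean])

lemma closedin_Collect_mem:
  "continuous_map T euclidean g \<Longrightarrow> closed C \<Longrightarrow> closedin T {p \<in> topspace T. g p \<in> C}"
  using closedin_continuous_map_preimage[of T euclidean g C] closed_closedin[of C] by blast

lemma closedin_Collect_eq_Nats_imp:
  assumes "continuous_map T euclideanreal g" "\<And>p. p \<in> topspace T \<Longrightarrow> g p \<in> \<nat>"
    and "closedin T {p \<in> topspace T. Q p}"
  shows "closedin T {p \<in> topspace T. g p = real n \<longrightarrow> Q p}"
proof -
  have "1 \<le> \<bar>real m - real n\<bar>" if "m \<noteq> n" for m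
    using that by (cases m n rule: linorder_cases) auto
  then have "g p \<noteq> real n \<longleftrightarrow> g p \<in> {s. 1 \<le> \<bar>s - real n\<bar>}" if "p \<in> topspace T" for p
    using assms(2)[OF that] by (metis Nats_cases abs_0 diff_self mem_Collect_eq not_one_le_zero)
  then have eq: "{p \<in> topspace T. g p = real n \<longrightarrow> Q p}
      = {p \<in> topspace T. g p \<in> {s. 1 \<le> \<bar>s - real n\<bar>} \<or> Q p}"
    by blast
  have "closed {s. 1 \<le> \<bar>s - real n\<bar>}"
    by (intro closed_Collect_le continuous_intros)
  then show ?thesis
    unfolding eq by (intro closedin_Collect_disj closedin_Collect_mem assms(1,3))
qed

definition code_space :: "(nat \<Rightarrow> real) topology" where
  "code_space = subtopology euclidean {z. z 0 \<in> \<nat>}"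

definition simplices_space :: "'a::topological_space set \<Rightarrow> (nat \<Rightarrow> real \<times> real \<Rightarrow> 'a) topology"
  where "simplices_space X =
    product_topology (\<lambda>_. product_topology (\<lambda>_. top_of_set X) simplex2) UNIV"

lemma topspace_code_space: "topspace code_space = {z. z 0 \<in> \<nat>}"
  by (simp add: code_space_def)

lemma topspace_simplices_space: "topspace (simplices_space X) = {w. \<forall>i. w i \<in> simplex2 \<rightarrow>\<^sub>E X}"
  by (auto simp: simplices_space_def PiE_iff extensional_def)

lemma compact_space_simplices_space: "compact X \<Longrightarrow> compact_space (simplices_space X)"
  by (simp add: simplices_space_def compact_space_product_topology compact_space_subtopology)

lemma continuous_map_simplices_space_eval:
  assumes "q \<in> simplex2"
  shows "continuous_map (simplices_space X) euclidean (\<lambda>w. w i q)"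
proof -
  have "continuous_map (simplices_space X) (product_topology (\<lambda>_. top_of_set X) simplex2) (\<lambda>w. w i)"
    unfolding simplices_space_def by (rule continuous_map_product_projection) simp
  moreover have
    "continuous_map (product_topology (\<lambda>_. top_of_set X) simplex2) (top_of_set X) (\<lambda>v. v q)"
    using assms by (rule continuous_map_product_projection)
  ultimately have "continuous_map (simplices_space X) (top_of_set X) (\<lambda>w. w i q)"
    using continuous_map_compose by (fastforce simp: o_def)
  then show ?thesis
    by (rule continuous_map_into_fulltopology)
qed

lemma second_countable_euclidean:
  "second_countable (euclidean :: 'a::second_countable_topology topology)"
proof -
  obtain \<B> :: "'a set set" where \<B>: "countable \<B>" "\<And>C. C \<in> \<B> \<Longrightarrow> open C"
    "\<And>S. open S \<Longrightarrow> \<exists>U. U \<subseteq> \<B> \<and> S = \<Union>U"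
    using univ_second_countable by blast
  show ?thesis
    unfolding second_countable_def
  proof (intro exI[of _ \<B>] conjI ballI allI impI)
    fix U :: "'a set" and x
    assume "openin euclidean U \<and> x \<in> U"
    then obtain \<U> where "\<U> \<subseteq> \<B>" "U = \<Union>\<U>" "x \<in> U"
      using \<B>(3) by auto
    then show "\<exists>V\<in>\<B>. x \<in> V \<and> V \<subseteq> U" by blast
  qed (use \<B> in auto)
qed

lemma Polish_space_code_space: "Polish_space code_space"
proof -
  have "closed ((\<lambda>z::nat \<Rightarrow> real. z 0) -` \<nat>)"
    by (rule closed_vimage) (rule closed_Nats, rule continuous_on_product_coordinates)
  then have "closedin euclidean {z :: nat \<Rightarrow> real. z 0 \<in> \<nat>}"
    unfolding vimage_def closed_closedin .
  then have "completely_metrizable_space code_space"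
    unfolding code_space_def
    by (rule completely_metrizable_space_closedin[OF completely_metrizable_space_euclidean])
  moreover have "separable_space code_space"
    unfolding code_space_def
    by (rule second_countable_imp_separable_space[OF
          second_countable_subtopology[OF second_countable_euclidean]])
  ultimately show ?thesis
    by (simp add: Polish_space_def)
qed

lemma analytic_in_fst_fst_image:
  fixes Z :: "(nat \<Rightarrow> real) topology"
  assumes "Polish_space Z" and "compact_space K"
    and "closedin (prod_topology (prod_topology Y Z) K) W"
  shows "analytic_in Y (fst ` fst ` W)"
proof -
  have "closedin (prod_topology Y Z) (fst ` W)"
    using closed_map_fst[OF assms(2), of "prod_topology Y Z"] assms(3)
    unfolding closed_map_def by blast
  then show ?thesis
    using assms(1) unfolding analytic_in_def by blast
qed

lemma topspace_cantor_top [simp]: "topspace cantor_top = UNIV"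
  by (simp add: cantor_top_def)

context null_loop_sequence
begin

lemma continuous_map_inf_concat_at:
  assumes "t \<in> {0..1}"
  shows "continuous_map cantor_top euclidean (\<lambda>\<alpha>. inf_concat x f \<alpha> t)"
  using assms
proof (cases rule: unit_interval_concat_cases)
  case (2 n)
  define s where "s = 2^Suc n * (t - concat_knot n)"
  have "continuous_map cantor_top (discrete_topology UNIV) (\<lambda>\<alpha>. \<alpha> n)"
    unfolding cantor_top_def by (rule continuous_map_product_projection) simp
  then have "continuous_map cantor_top euclidean ((\<lambda>b. if b then f n s else x) \<circ> (\<lambda>\<alpha>. \<alpha> n))"
    by (rule continuous_map_compose) simp
  then show ?thesis
    by (rule continuous_map_eq) (use 2 in \<open>simp add: inf_concat_piece[of n] s_def concat_piece_def\<close>)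
qed simp

lemma continuous_map_chain_term:
  assumes "continuous_map T cantor_top a" "continuous_map T cantor_top b"
    and "continuous_map T (simplices_space X) w" and "t \<in> {0..1}"
  shows "continuous_map T euclidean
    (\<lambda>p. chain_term m (w p) (inf_concat x f (a p)) (inf_concat x f (b p)) u t)"
proof -
  have eval: "continuous_map T euclidean (\<lambda>p. w p i q)" if "q \<in> simplex2" for i q
    using continuous_map_compose[OF assms(3) continuous_map_simplices_space_eval[OF that]]
    by (simp add: o_def)
  have "(1 - t, t) \<in> simplex2" "(0, t) \<in> simplex2" "(t, 0) \<in> simplex2"
    using assms(4) by (auto simp: simplex2_def)
  moreover have "continuous_map T euclidean (\<lambda>p. inf_concat x f (a p) t)"
    "continuous_map T euclidean (\<lambda>p. inf_concat x f (b p) t)"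
    using continuous_map_compose[OF assms(1) continuous_map_inf_concat_at[OF assms(4)]]
      continuous_map_compose[OF assms(2) continuous_map_inf_concat_at[OF assms(4)]]
    by (simp_all add: o_def)
  ultimately show ?thesis
    unfolding chain_term_def face0_def face1_def face2_def
    by (cases "u < 3 * m"; cases "u = 3 * m") (auto intro: eval)
qed

text \<open>The coordinate z 0 codes the discrete data of a certificate (weights and labelling),
  the coordinates z (Suc k) its modulus of continuity.\<close>

definition certified_pairs
  :: "((((nat \<Rightarrow> bool) \<times> (nat \<Rightarrow> bool)) \<times> (nat \<Rightarrow> real)) \<times> (nat \<Rightarrow> real \<times> real \<Rightarrow> 'a)) set"
  where "certified_pairs =
    {p \<in> topspace (prod_topology (prod_topology (prod_topology cantor_top cantor_top) code_space)
                    (simplices_space X)).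
      case p of (((\<alpha>, \<beta>), z), w) \<Rightarrow> \<forall>n. z 0 = real n \<longrightarrow>
        boundary_certificate (from_nat n) (\<lambda>k. z (Suc k)) w (inf_concat x f \<alpha>) (inf_concat x f \<beta>)}"

lemma ex_certified_pairs_iff:
  "(\<exists>z w. (((\<alpha>, \<beta>), z), w) \<in> certified_pairs) \<longleftrightarrow>
    (\<exists>d \<mu> w. (\<forall>i. w i \<in> simplex2 \<rightarrow>\<^sub>E X) \<and>
      boundary_certificate d \<mu> w (inf_concat x f \<alpha>) (inf_concat x f \<beta>))"
proof
  assume "\<exists>z w. (((\<alpha>, \<beta>), z), w) \<in> certified_pairs"
  then obtain z w n where "\<forall>i. w i \<in> simplex2 \<rightarrow>\<^sub>E X" "z 0 = real n"
    "boundary_certificate (from_nat n) (\<lambda>k. z (Suc k)) w (inf_concat x f \<alpha>) (inf_concat x f \<beta>)"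
    by (auto simp: certified_pairs_def topspace_code_space topspace_simplices_space
        elim!: Nats_cases)
  then show "\<exists>d \<mu> w. (\<forall>i. w i \<in> simplex2 \<rightarrow>\<^sub>E X) \<and>
    boundary_certificate d \<mu> w (inf_concat x f \<alpha>) (inf_concat x f \<beta>)"
    by blast
next
  assume "\<exists>d \<mu> w. (\<forall>i. w i \<in> simplex2 \<rightarrow>\<^sub>E X) \<and>
    boundary_certificate d \<mu> w (inf_concat x f \<alpha>) (inf_concat x f \<beta>)"
  then obtain d \<mu> w where "\<forall>i. w i \<in> simplex2 \<rightarrow>\<^sub>E X"
    "boundary_certificate d \<mu> w (inf_concat x f \<alpha>) (inf_concat x f \<beta>)"
    by blast
  then have "(((\<alpha>, \<beta>), case_nat (real (to_nat d)) \<mu>), w) \<in> certified_pairs"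
    by (simp add: certified_pairs_def topspace_code_space topspace_simplices_space)
  then show "\<exists>z w. (((\<alpha>, \<beta>), z), w) \<in> certified_pairs"
    by blast
qed

lemma fst_fst_certified_pairs:
  "fst ` fst ` certified_pairs = {(\<alpha>, \<beta>). homologous X (inf_concat x f \<alpha>) (inf_concat x f \<beta>)}"
proof -
  have "(\<exists>z w. (((\<alpha>, \<beta>), z), w) \<in> certified_pairs) \<longleftrightarrow>
    homologous X (inf_concat x f \<alpha>) (inf_concat x f \<beta>)" for \<alpha> \<beta>
    unfolding ex_certified_pairs_iff using homologous_iff_boundary_certificate base_in_X by blast
  then show ?thesis
    by force
qed

lemma closedin_certified_pairs:
  "closedin (prod_topology (prod_topology (prod_topology cantor_top cantor_top) code_space)
     (simplices_space X)) certified_pairs"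
  (is "closedin ?T _")
proof -
  have cont_z: "continuous_map ?T euclideanreal (\<lambda>p. snd (fst p) k)" for k
  proof -
    have "continuous_map ?T code_space (\<lambda>p. snd (fst p))"
      using continuous_map_snd_of[OF continuous_map_fst] by (simp add: o_def)
    then have "continuous_map ?T euclidean (\<lambda>p. snd (fst p))"
      unfolding code_space_def by (rule continuous_map_into_fulltopology)
    moreover have "continuous_map euclidean euclideanreal (\<lambda>z :: nat \<Rightarrow> real. z k)"
      using continuous_map_product_projection[of k UNIV "\<lambda>_. euclideanreal"]
      by (simp add: euclidean_product_topology)
    ultimately have "continuous_map ?T euclideanreal ((\<lambda>z. z k) \<circ> (\<lambda>p. snd (fst p)))"
      by (rule continuous_map_compose)
    then show ?thesis
      by (simp add: o_def)
  qed
  have cont_w: "continuous_map ?T (simplices_space X) snd"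
    by (rule continuous_map_snd)
  have cont_eval: "continuous_map ?T euclidean (\<lambda>p. snd p i q)" if "q \<in> simplex2" for i q
    using continuous_map_compose[OF cont_w continuous_map_simplices_space_eval[OF that]]
    by (simp add: o_def)
  have cont_term: "continuous_map ?T euclidean (\<lambda>p. chain_term m (snd p)
      (inf_concat x f (fst (fst (fst p)))) (inf_concat x f (snd (fst (fst p)))) u t)"
    if "t \<in> {0..1}" for m u t
    using continuous_map_fst_of[OF continuous_map_fst_of[OF continuous_map_fst]]
      continuous_map_snd_of[OF continuous_map_fst_of[OF continuous_map_fst]]
    by (intro continuous_map_chain_term cont_w that) (simp_all add: o_def)
  have modulus: "closedin ?T {p \<in> topspace ?T. 1 \<le> dist q r * snd (fst p) (Suc k) \<or>
      dist (snd p i q) (snd p i r) \<le> c}" if "q \<in> simplex2" "r \<in> simplex2" for q r k i c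
  proof (intro closedin_Collect_disj)
    have "closedin ?T {p \<in> topspace ?T. snd (fst p) (Suc k) \<in> {s. 1 \<le> dist q r * s}}"
      by (intro closedin_Collect_mem cont_z closed_Collect_le continuous_intros)
    then show "closedin ?T {p \<in> topspace ?T. 1 \<le> dist q r * snd (fst p) (Suc k)}"
      by simp
    have "continuous_map ?T (prod_topology euclidean euclidean) (\<lambda>p. (snd p i q, snd p i r))"
      using that by (intro continuous_map_pairedI cont_eval)
    then have "closedin ?T
        {p \<in> topspace ?T. (snd p i q, snd p i r) \<in> {y. dist (fst y) (snd y) \<le> c}}"
      by (intro closedin_Collect_mem closed_Collect_le continuous_intros) simp
    then show "closedin ?T {p \<in> topspace ?T. dist (snd p i q) (snd p i r) \<le> c}"
      by simp
  qed
  show ?thesis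
    unfolding certified_pairs_def case_prod_beta boundary_certificate_def has_modulus_on_def
      cancelling_labelling_def same_on01_def Ball_def
    by (intro closedin_Collect_all closedin_Collect_eq_Nats_imp closedin_Collect_conj
        closedin_Collect_const_imp closedin_Collect_const closedin_Collect_eq
        cont_z cont_term modulus)
       (auto simp: topspace_code_space)
qed

lemma analytic_in_homologous_pairs:
  assumes "compact X"
  shows "analytic_in (prod_topology cantor_top cantor_top)
    {(\<alpha>, \<beta>). homologous X (inf_concat x f \<alpha>) (inf_concat x f \<beta>)}"
  using analytic_in_fst_fst_image[OF Polish_space_code_space
      compact_space_simplices_space[OF assms] closedin_certified_pairs]
  by (simp add: fst_fst_certified_pairs)

end

theorem lemma2p3:
  fixes X :: "'a::metric_space set" and x :: 'a and f :: "nat \<Rightarrow> real \<Rightarrow> 'a"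
  assumes "compact X" and "connected X" and "locally connected X"
    and "x \<in> X"
    and "\<And>n. path (f n)" and "\<And>n. path_image (f n) \<subseteq> X"
    and "\<And>n. pathstart (f n) = x" and "\<And>n. pathfinish (f n) = x"
    and "\<And>n. diameter (path_image (f n)) \<le> (1/2)^n"
    and "\<And>n. \<not> nulhomologous X (f n)"
  shows "analytic_in (prod_topology cantor_top cantor_top)
           {(\<alpha>, \<beta>). homologous X (inf_concat x f \<alpha>) (inf_concat x f \<beta>)}
       \<and> equiv UNIV {(\<alpha>, \<beta>). homologous X (inf_concat x f \<alpha>) (inf_concat x f \<beta>)}
       \<and> (\<forall>\<alpha> \<beta>. card {n. \<alpha> n \<noteq> \<beta> n} = 1 \<longrightarrow>
             \<not> homologous X (inf_concat x f \<alpha>) (inf_concat x f \<beta>))"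
proof -
  interpret null_loop_sequence X x f
    using assms(4-9) by unfold_locales
  have "\<not> homologous X (inf_concat x f \<alpha>) (inf_concat x f \<beta>)"
    if one: "card {n. \<alpha> n \<noteq> \<beta> n} = 1" for \<alpha> \<beta>
  proof -
    obtain n where "{m. \<alpha> m \<noteq> \<beta> m} = {n}"
      using one card_1_singletonE by blast
    then show ?thesis
      using assms(10) by (rule not_homologous_inf_concat_if_differ_once)
  qed
  then show ?thesis
    using analytic_in_homologous_pairs[OF assms(1)] equiv_homologous by blast
qed

end
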